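(* Let $N$ be a free abelian group of finite rank $n$ with a homomorphism $\psi:N\to\mathbb{Z}^2$ with finite cokernel, $K=\ker\psi$, $\langle a,b\rangle=\det(\psi(a),\psi(b))$. Let $\tilde{\mathbf{s}}=(e_i)_{1\le i\le n}$ be a cyclically ordered seed with underlying seed $\mathbf{s}$, and let $\mathscr{S}$ be the mutation equivalence class of $\mathbf{s}$. Then for all $\alpha,\beta\in K$, $(\alpha,\beta)_{\mathscr{S}}=-\chi_{\tilde{\mathbf{s}}}(\alpha,\beta)$.
   Context: A seed is an unordered basis $\{e_i\}$ of $N$ with each $\psi(e_i)$ nonzero primitive; seeds are mutation equivalent if related by finitely many mutations $\mu_j^\epsilon$ ($e_j\mapsto-e_j$, $e_i\mapsto e_i+[\epsilon\langle e_i,e_j\rangle]_+e_j$ for $i\ne j$, $[a]_+=\max(0,a)$, $\epsilon\in\{\pm\}$). A cyclic ordering of a seed is an ordering $(e_1,\dots,e_n)$ for which there are determinations $\theta_i$ of the arguments of $\psi(e_i)\in\mathbb{R}^2=\mathbb{C}$ with $\theta_1\le\theta_2\le\cdots\le\theta_n\le\theta_1+2\pi$. The bilinear form $\chi_{\tilde{\mathbf{s}}}$ on $N$ is defined by $\chi_{\tilde{\mathbf{s}}}(e_i,e_j)=1$ if $i=j$, $\langle e_i,e_j\rangle$ if $i>j$, $0$ if $i<j$. Intersection form: choose a smooth complete fan containing the rays $\mathbb{R}_{\ge0}\psi(e_i)$, with toric surface $\overline{Y}$, toric divisors $\overline{D}_\rho$, and $\overline{D}_i$ the divisor of the ray of $\psi(e_i)$;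 blow up distinct points $p_i\in\overline{D}_i$ that are smooth points of the toric boundary to get $\pi:Y\to\overline{Y}$ with exceptional curves $E_i$. For $a=\sum a_ie_i\in K$ set $\iota_\pi(a)=\pi^*C_a-\sum a_iE_i$, where $C_a\in NS(\overline{Y})$ is the unique class with $C_a\cdot\overline{D}_\rho=\sum_{i:\overline{D}_i=\overline{D}_\rho}a_i$ for each ray $\rho$. Then $(a,b)_{\mathscr{S}}:=\iota_\pi(a)\cdot\iota_\pi(b)$ (this depends only on $\mathscr{S}$). *)

theory Defs
  imports Complex_Main
begin

(* Lattice Z^2 as int \<times> int; <a,b> = det(psi a, psi b). *)
definition det2 :: "int \<times> int \<Rightarrow> int \<times> int \<Rightarrow> int" where
  "det2 u w = fst u * snd w - snd u * fst w"

definition to_complex :: "int \<times> int \<Rightarrow> complex" where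
  "to_complex u = Complex (real_of_int (fst u)) (real_of_int (snd u))"

definition primitive :: "int \<times> int \<Rightarrow> bool" where
  "primitive u \<longleftrightarrow> u \<noteq> (0,0) \<and> gcd (fst u) (snd u) = 1"

definition arg_det :: "int \<times> int \<Rightarrow> real \<Rightarrow> bool" where
  "arg_det u \<theta> \<longleftrightarrow> (\<exists>r>0. to_complex u = complex_of_real r * cis \<theta>)"

(* The seed is the basis (e_0,...,e_{n-1}) of N; we identify N with Z^n via this
   basis, so psi is determined by v i = psi(e_i).  Elements of N are coefficient
   vectors a :: nat \<Rightarrow> int (only a i for i < n matter). *)

(* psi has finite cokernel iff its image has rank 2 *)
definition finite_coker :: "nat \<Rightarrow> (nat \<Rightarrow> int \<times> int) \<Rightarrow> bool" where
  "finite_coker n v \<longleftrightarrow> (\<exists>i<n. \<exists>j<n. det2 (v i) (v j) \<noteq> 0)"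

definition is_seed :: "nat \<Rightarrow> (nat \<Rightarrow> int \<times> int) \<Rightarrow> bool" where
  "is_seed n v \<longleftrightarrow> (\<forall>i<n. primitive (v i))"

definition cyclically_ordered :: "nat \<Rightarrow> (nat \<Rightarrow> int \<times> int) \<Rightarrow> bool" where
  "cyclically_ordered n v \<longleftrightarrow>
     (\<exists>\<theta>::nat \<Rightarrow> real. (\<forall>i<n. arg_det (v i) (\<theta> i))
        \<and> (\<forall>i. Suc i < n \<longrightarrow> \<theta> i \<le> \<theta> (Suc i))
        \<and> (0 < n \<longrightarrow> \<theta> (n - 1) \<le> \<theta> 0 + 2 * pi))"

definition psi :: "nat \<Rightarrow> (nat \<Rightarrow> int \<times> int) \<Rightarrow> (nat \<Rightarrow> int) \<Rightarrow> int \<times> int" where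
  "psi n v a = ((\<Sum>i<n. a i * fst (v i)), (\<Sum>i<n. a i * snd (v i)))"

definition in_K :: "nat \<Rightarrow> (nat \<Rightarrow> int \<times> int) \<Rightarrow> (nat \<Rightarrow> int) \<Rightarrow> bool" where
  "in_K n v a \<longleftrightarrow> psi n v a = (0, 0)"

definition chi :: "nat \<Rightarrow> (nat \<Rightarrow> int \<times> int) \<Rightarrow> (nat \<Rightarrow> int) \<Rightarrow> (nat \<Rightarrow> int) \<Rightarrow> int" where
  "chi n v a b = (\<Sum>i<n. \<Sum>j<n. a i * b j *
      (if i = j then 1 else if i > j then det2 (v i) (v j) else 0))"

(* Smooth complete fan in R^2 with rays spanned by the primitive vectors
   w 0, ..., w (m-1), listed counterclockwise (strictly increasing arguments,
   total turn less than one revolution), consecutive rays (cyclically) spanning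
   smooth cones: det(w_k, w_{k+1}) = 1. *)
definition smooth_complete_fan :: "nat \<Rightarrow> (nat \<Rightarrow> int \<times> int) \<Rightarrow> bool" where
  "smooth_complete_fan m w \<longleftrightarrow> 3 \<le> m
     \<and> (\<forall>k<m. det2 (w k) (w ((k + 1) mod m)) = 1)
     \<and> (\<exists>\<phi>::nat \<Rightarrow> real. (\<forall>k<m. arg_det (w k) (\<phi> k))
           \<and> (\<forall>k. Suc k < m \<longrightarrow> \<phi> k < \<phi> (Suc k))
           \<and> \<phi> (m - 1) < \<phi> 0 + 2 * pi)"

(* the fan contains the rays R_{>=0} psi(e_i); since psi(e_i) and w k are both
   primitive, this means psi(e_i) is one of the w k *)
definition fan_contains_rays :: "nat \<Rightarrow> (nat \<Rightarrow> int \<times> int) \<Rightarrow> nat \<Rightarrow> (nat \<Rightarrow> int \<times> int) \<Rightarrow> bool" where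
  "fan_contains_rays m w n v \<longleftrightarrow> (\<forall>i<n. \<exists>k<m. w k = v i)"

(* Intersection numbers of toric divisors D_j . D_k on the smooth complete toric
   surface of the fan: D_k^2 = -b_k where w_{k-1} + w_{k+1} = b_k w_k
   (equivalently b_k = det(w_{k-1}, w_{k+1})), D_j.D_k = 1 for adjacent rays,
   0 otherwise. *)
definition toric_int :: "nat \<Rightarrow> (nat \<Rightarrow> int \<times> int) \<Rightarrow> nat \<Rightarrow> nat \<Rightarrow> int" where
  "toric_int m w j k =
     (if j = k then - det2 (w ((k + m - 1) mod m)) (w ((k + 1) mod m))
      else if j = (k + 1) mod m \<or> k = (j + 1) mod m then 1 else 0)"

(* divisor classes on the toric surface, represented by integer combinations
   c = \<Sum>_k c_k D_k of toric divisors (every class is of this form) *)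
definition toric_pair :: "nat \<Rightarrow> (nat \<Rightarrow> int \<times> int) \<Rightarrow> (nat \<Rightarrow> int) \<Rightarrow> (nat \<Rightarrow> int) \<Rightarrow> int" where
  "toric_pair m w c d = (\<Sum>j<m. \<Sum>k<m. c j * d k * toric_int m w j k)"

(* c represents the class C_a: C_a . D_rho = \<Sum>_{i : D_i = D_rho} a_i *)
definition represents_C :: "nat \<Rightarrow> (nat \<Rightarrow> int \<times> int) \<Rightarrow> nat \<Rightarrow> (nat \<Rightarrow> int \<times> int)
     \<Rightarrow> (nat \<Rightarrow> int) \<Rightarrow> (nat \<Rightarrow> int) \<Rightarrow> bool" where
  "represents_C m w n v a c \<longleftrightarrow>
     (\<forall>k<m. toric_pair m w c (\<lambda>l. if l = k then 1 else 0) = (\<Sum>i | i < n \<and> v i = w k. a i))"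

(* iota(a).iota(b) = (pi^* C_a - \<Sum> a_i E_i).(pi^* C_b - \<Sum> b_i E_i)
                   = C_a.C_b - \<Sum> a_i b_i,
   using pi^*C . E_i = 0, E_i . E_j = -delta_ij for the exceptional curves. *)
definition blowup_pair :: "nat \<Rightarrow> (nat \<Rightarrow> int \<times> int) \<Rightarrow> nat \<Rightarrow> (nat \<Rightarrow> int \<times> int)
     \<Rightarrow> (nat \<Rightarrow> int) \<Rightarrow> (nat \<Rightarrow> int) \<Rightarrow> (nat \<Rightarrow> int) \<Rightarrow> (nat \<Rightarrow> int) \<Rightarrow> int" where
  "blowup_pair m w n v a b c d = toric_pair m w c d - (\<Sum>i<n. a i * b i)"

end

theory Submission
  imports Defs
begin

(* Let r_k(a) be the total coefficient that a puts on the seed vectors spanning the k-th ray w_k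
   of the fan.  For a in K the r_k(a) are the coefficients of a relation sum_k r_k w_k = 0, and the
   divisor sum_k c_k D_k with c_k = <r_0 w_0 + ... + r_(k-1) w_(k-1), w_k> has degree r_k(a) on
   every D_k, by the smooth-cone identities w_(k-1) + w_(k+1) = b_k w_k.  Pairing with this
   representative gives C_a.C_b = sum_(l<k) r_l(a) r_k(b) <w_l, w_k>, the sum of
   a_i b_j <e_i, e_j> over the pairs whose rays come in the order e_i before e_j around the fan.
   The cyclic ordering of the seed is a rotation of the fan order, and rotating does not change
   this sum: moving an initial segment of indices to the end changes it by
   <psi a', psi b''> - <psi a'', psi b'>, which vanishes since psi a' = - psi a'' and
   psi b' = - psi b''.  Summing over i < j instead, antisymmetry and <psi a, psi b> = 0 turn the
   result into sum_i a_i b_i - chi(a, b). *)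

lemma det2_self [simp]: "det2 u u = 0"
  by (simp add: det2_def)

lemma det2_swap: "det2 u u' = - det2 u' u"
  by (simp add: det2_def)

lemma det2_plucker: "det2 a b * det2 x c + det2 b c * det2 x a + det2 c a * det2 x b = 0"
  by (simp add: det2_def algebra_simps)

lemma sum_det2_psi: "(\<Sum>i<n. a i * det2 (v i) x) = det2 (psi n v a) x"
proof -
  have "(\<Sum>i<n. a i * det2 (v i) x) = (\<Sum>i<n. a i * fst (v i) * snd x - a i * snd (v i) * fst x)"
    by (simp add: det2_def algebra_simps)
  also have "\<dots> = (\<Sum>i<n. a i * fst (v i)) * snd x - (\<Sum>i<n. a i * snd (v i)) * fst x"
    by (simp add: sum_subtractf sum_distrib_right)
  finally show ?thesis by (simp add: det2_def psi_def)
qed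

lemma sum_sum_det2_psi:
  "(\<Sum>i<n. \<Sum>j<n. a i * b j * det2 (v i) (v j)) = det2 (psi n v a) (psi n v b)"
proof -
  have "(\<Sum>i<n. \<Sum>j<n. a i * b j * det2 (v i) (v j)) = (\<Sum>j<n. b j * det2 (psi n v a) (v j))"
    by (subst sum.swap) (simp add: sum_distrib_left mult_ac flip: sum_det2_psi)
  also have "\<dots> = - (\<Sum>j<n. b j * det2 (v j) (psi n v a))"
    by (simp add: det2_swap[of "psi n v a"] sum_negf)
  finally show ?thesis by (simp add: sum_det2_psi det2_swap[of "psi n v b"])
qed

lemma in_K_sum_det2: "in_K n v a \<Longrightarrow> (\<Sum>i<n. a i * det2 (v i) x) = 0"
  unfolding in_K_def sum_det2_psi by (simp add: det2_def)

lemma in_K_det2_psi_split: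
  assumes "in_K n v a"
  shows "det2 (psi n v (\<lambda>i. if H i then a i else 0)) x
    = - det2 (psi n v (\<lambda>i. if H i then 0 else a i)) x"
proof -
  have "(\<Sum>i<n. (if H i then a i else 0) * det2 (v i) x)
      + (\<Sum>i<n. (if H i then 0 else a i) * det2 (v i) x) = (\<Sum>i<n. a i * det2 (v i) x)"
    by (auto simp: sum.distrib[symmetric] intro!: sum.cong)
  then show ?thesis
    using in_K_sum_det2[OF assms] by (simp add: sum_det2_psi)
qed

lemma chi_in_K:
  assumes "in_K n v a" "in_K n v b"
  shows "chi n v a b = (\<Sum>i<n. a i * b i)
    - (\<Sum>i<n. \<Sum>j<n. if i < j then a i * b j * det2 (v i) (v j) else 0)"
proof -
  define F where "F i j = a i * b j * det2 (v i) (v j)" for i j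
  have "(\<Sum>i<n. \<Sum>j<n. if i < j then F i j else 0) + (\<Sum>i<n. \<Sum>j<n. if j < i then F i j else 0)
      = (\<Sum>i<n. \<Sum>j<n. F i j)"
    by (simp add: sum.distrib[symmetric]) (auto simp: F_def intro!: sum.cong)
  also have "\<dots> = 0"
    using assms unfolding F_def sum_sum_det2_psi in_K_def by (simp add: det2_def)
  moreover have "chi n v a b = (\<Sum>i<n. a i * b i) + (\<Sum>i<n. \<Sum>j<n. if j < i then F i j else 0)"
  proof -
    have "chi n v a b = (\<Sum>i<n. \<Sum>j<n. (if i = j then a i * b j else 0) + (if j < i then F i j else 0))"
      unfolding chi_def F_def by (auto intro!: sum.cong)
    then show ?thesis by (simp add: sum.distrib)
  qed
  ultimately show ?thesis unfolding F_def by linarith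
qed

(* For h upward closed on {..<n}, i.e. h i iff i0 <= i, this is the order i0, ..., n-1, 0, ..., i0-1. *)
definition rotated_less :: "(nat \<Rightarrow> bool) \<Rightarrow> nat \<Rightarrow> nat \<Rightarrow> bool" where
  "rotated_less h i j \<longleftrightarrow> (if h i = h j then i < j else h i)"

lemma sum_rotated_less_det2:
  assumes a: "in_K n v a" and b: "in_K n v b" and h: "mono_on {..<n} h"
  shows "(\<Sum>i<n. \<Sum>j<n. if rotated_less h i j then a i * b j * det2 (v i) (v j) else 0)
       = (\<Sum>i<n. \<Sum>j<n. if i < j then a i * b j * det2 (v i) (v j) else 0)"
proof -
  define F where "F i j = a i * b j * det2 (v i) (v j)" for i j
  have split: "(if rotated_less h i j then F i j else 0)
      = (if i < j then F i j else 0) + (if h i \<and> \<not> h j then F i j else 0)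
        - (if \<not> h i \<and> h j then F i j else 0)" if "i < n" "j < n" for i j
    using mono_onD[OF h, of i j] mono_onD[OF h, of j i] that
    by (cases "h i"; cases "h j") (auto simp: rotated_less_def)
  have cross: "(\<Sum>i<n. \<Sum>j<n. if h i \<and> \<not> h j then F i j else 0)
      = (\<Sum>i<n. \<Sum>j<n. if \<not> h i \<and> h j then F i j else 0)"
  proof -
    let ?A1 = "psi n v (\<lambda>i. if h i then a i else 0)" and ?A0 = "psi n v (\<lambda>i. if h i then 0 else a i)"
    let ?B1 = "psi n v (\<lambda>i. if h i then b i else 0)" and ?B0 = "psi n v (\<lambda>i. if h i then 0 else b i)"
    have "(\<Sum>i<n. \<Sum>j<n. if h i \<and> \<not> h j then F i j else 0) = det2 ?A1 ?B0"
      by (subst sum_sum_det2_psi[symmetric]) (auto simp: F_def intro!: sum.cong)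
    also have "\<dots> = - det2 ?A0 ?B0"
      by (rule in_K_det2_psi_split[OF a])
    also have "\<dots> = det2 ?B0 ?A0"
      by (simp add: det2_swap[of ?A0])
    also have "\<dots> = - det2 ?B1 ?A0"
      by (simp add: in_K_det2_psi_split[OF b])
    also have "\<dots> = det2 ?A0 ?B1"
      by (simp add: det2_swap[of ?B1])
    also have "\<dots> = (\<Sum>i<n. \<Sum>j<n. if \<not> h i \<and> h j then F i j else 0)"
      by (subst sum_sum_det2_psi[symmetric]) (auto simp: F_def intro!: sum.cong)
    finally show ?thesis .
  qed
  show ?thesis
    unfolding F_def[symmetric] using split cross by (simp add: sum.distrib sum_subtractf)
qed

lemma rotated_less_iff_less:
  fixes \<theta> \<sigma> :: "nat \<Rightarrow> real"
  assumes mono: "mono_on {..<n} \<theta>" and "i < n" "j < n" "\<sigma> i \<noteq> \<sigma> j"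
    and unwind: "\<And>i. i < n \<Longrightarrow> \<sigma> i = (if h i then \<theta> i - s else \<theta> i)"
    and below: "\<And>i. i < n \<Longrightarrow> h i \<Longrightarrow> \<sigma> i \<le> t"
    and above: "\<And>i. i < n \<Longrightarrow> \<not> h i \<Longrightarrow> t \<le> \<sigma> i"
  shows "\<sigma> i < \<sigma> j \<longleftrightarrow> rotated_less h i j"
proof (cases "h i = h j")
  case True
  then have "\<sigma> i - \<sigma> j = \<theta> i - \<theta> j"
    using unwind[OF \<open>i < n\<close>] unwind[OF \<open>j < n\<close>] by auto
  moreover have "\<theta> i \<le> \<theta> j" if "i < j"
    using mono_onD[OF mono] \<open>j < n\<close> that by auto
  moreover have "\<theta> j \<le> \<theta> i" if "\<not> i < j"
    using mono_onD[OF mono] \<open>i < n\<close> that by auto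
  ultimately show ?thesis
    using True \<open>\<sigma> i \<noteq> \<sigma> j\<close> unfolding rotated_less_def by force
next
  case False
  then show ?thesis
    using below above assms(2-4) unfolding rotated_less_def by (cases "h i") force+
qed

lemma arg_det_unique:
  assumes "arg_det u x" "arg_det u y"
  shows "\<exists>z::int. y = x + 2 * pi * z"
proof -
  obtain r where r: "r > 0" "to_complex u = complex_of_real r * cis x"
    using assms(1) arg_det_def by auto
  obtain s where s: "s > 0" "to_complex u = complex_of_real s * cis y"
    using assms(2) arg_det_def by auto
  have "norm (to_complex u) = r"
    using r by (simp add: norm_mult)
  moreover have "norm (to_complex u) = s"
    using s by (simp add: norm_mult)
  ultimately have "cis x = cis y"
    using r s by simp
  then have "cos (y - x) = 1"
    by (metis cis.sel(1) cis_divide cis_neq_zero divide_self_if one_complex.sel(1))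
  then obtain z :: int where "y - x = real_of_int z * 2 * pi"
    using cos_one_2pi_int by metis
  then have "y = x + 2 * pi * z"
    by (simp add: algebra_simps)
  then show ?thesis ..
qed

lemma angle_window:
  fixes p x y :: real and z :: int
  assumes "p \<le> x" "x < p + 2 * pi" "p \<le> y" "y < p + 4 * pi" "y = x + 2 * pi * z"
  shows "x = (if y < p + 2 * pi then y else y - 2 * pi)"
proof -
  have "2 * pi * (-1) < 2 * pi * z" "2 * pi * z < 2 * pi * 2"
    using assms by linarith+
  moreover have "0 < 2 * pi"
    by simp
  ultimately have "-1 < real_of_int z" "real_of_int z < 2"
    using mult_less_cancel_left_pos by blast+
  then have "z = 0 \<or> z = 1"
    by linarith
  then show ?thesis
    using assms by auto
qed

lemma window_angles_rotated_less:
  fixes \<theta> \<sigma> :: "nat \<Rightarrow> real"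
  assumes "0 < n" and \<theta>_mono: "mono_on {..<n} \<theta>"
    and \<theta>_turn: "\<And>i. i < n \<Longrightarrow> \<theta> i \<le> \<theta> 0 + 2 * pi"
    and \<sigma>_window: "\<And>i. i < n \<Longrightarrow> p \<le> \<sigma> i \<and> \<sigma> i < p + 2 * pi"
    and congruent: "\<And>i. i < n \<Longrightarrow> \<exists>z::int. \<theta> i = \<sigma> i + 2 * pi * z"
  obtains h where "mono_on {..<n} h"
    and "\<And>i j. i < n \<Longrightarrow> j < n \<Longrightarrow> \<sigma> i \<noteq> \<sigma> j \<Longrightarrow> \<sigma> i < \<sigma> j \<longleftrightarrow> rotated_less h i j"
proof -
  obtain z\<^sub>0 :: int where z\<^sub>0: "\<theta> 0 = \<sigma> 0 + 2 * pi * z\<^sub>0"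
    using congruent[OF \<open>0 < n\<close>] by blast
  (* theta' is the lift of the sigma i normalised by theta' 0 = sigma 0; the i with h i are those
     that have gone once around past p, so they come before the others in the order of sigma. *)
  define \<theta>' where "\<theta>' i = \<theta> i - 2 * pi * z\<^sub>0" for i
  define h where "h i \<longleftrightarrow> p + 2 * pi \<le> \<theta>' i" for i
  have \<theta>'_mono: "mono_on {..<n} \<theta>'"
    using mono_onD[OF \<theta>_mono] by (intro mono_onI) (simp add: \<theta>'_def)
  have \<theta>'_range: "\<sigma> 0 \<le> \<theta>' i \<and> \<theta>' i \<le> \<sigma> 0 + 2 * pi" if "i < n" for i
    using mono_onD[OF \<theta>'_mono, of 0 i] \<theta>_turn[OF that] that z\<^sub>0 by (simp add: \<theta>'_def)
  have unwind: "\<sigma> i = (if h i then \<theta>' i - 2 * pi else \<theta>' i)" if i: "i < n" for i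
  proof -
    obtain z :: int where "\<theta> i = \<sigma> i + 2 * pi * z"
      using congruent[OF i] by blast
    then have "\<theta>' i = \<sigma> i + 2 * pi * of_int (z - z\<^sub>0)"
      by (simp add: \<theta>'_def algebra_simps)
    moreover have "p \<le> \<theta>' i" "\<theta>' i < p + 4 * pi"
      using \<sigma>_window[of 0] \<theta>'_range[OF i] \<open>0 < n\<close> by auto
    ultimately have "\<sigma> i = (if \<theta>' i < p + 2 * pi then \<theta>' i else \<theta>' i - 2 * pi)"
      using angle_window \<sigma>_window[OF i] by blast
    then show ?thesis
      by (auto simp: h_def)
  qed
  have h_mono: "mono_on {..<n} h"
  proof (intro mono_onI le_boolI)
    fix r s assume "r \<in> {..<n}" "s \<in> {..<n}" "r \<le> s" "h r"
    then show "h s"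
      using mono_onD[OF \<theta>'_mono] unfolding h_def by (meson order_trans)
  qed
  have "\<sigma> i \<le> \<sigma> 0" if "i < n" "h i" for i
    using unwind[OF that(1)] \<theta>'_range[OF that(1)] that(2) by simp
  moreover have "\<sigma> 0 \<le> \<sigma> i" if "i < n" "\<not> h i" for i
    using unwind[OF that(1)] \<theta>'_range[OF that(1)] that(2) by simp
  ultimately show thesis
    using that[OF h_mono] rotated_less_iff_less[OF \<theta>'_mono _ _ _ unwind] by blast
qed

lemma cyclically_ordered_angles:
  assumes "cyclically_ordered n v"
  obtains \<theta> :: "nat \<Rightarrow> real"
  where "\<And>i. i < n \<Longrightarrow> arg_det (v i) (\<theta> i)" and "mono_on {..<n} \<theta>"
    and "\<And>i. i < n \<Longrightarrow> \<theta> i \<le> \<theta> 0 + 2 * pi"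
proof -
  obtain \<theta> :: "nat \<Rightarrow> real" where arg: "\<forall>i<n. arg_det (v i) (\<theta> i)"
    and step: "\<forall>i. Suc i < n \<longrightarrow> \<theta> i \<le> \<theta> (Suc i)"
    and turn: "0 < n \<longrightarrow> \<theta> (n - 1) \<le> \<theta> 0 + 2 * pi"
    using assms unfolding cyclically_ordered_def by blast
  have mono: "mono_on {..<n} \<theta>"
  proof (rule mono_onI)
    fix i j assume "i \<in> {..<n}" "j \<in> {..<n}" "i \<le> j"
    then have sub: "{i..<j} \<subseteq> {k. Suc k < n}"
      by auto
    show "\<theta> i \<le> \<theta> j"
      by (rule lift_Suc_mono_le_ivl[OF _ \<open>i \<le> j\<close> sub]) (use step in simp)
  qed
  have "\<theta> i \<le> \<theta> 0 + 2 * pi" if "i < n" for i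
  proof -
    have "\<theta> i \<le> \<theta> (n - 1)"
      using that by (intro mono_onD[OF mono]) auto
    then show ?thesis
      using turn that by simp
  qed
  with arg mono show thesis
    by (intro that) auto
qed

lemma smooth_complete_fan_angles:
  assumes "smooth_complete_fan m w"
  obtains \<phi> :: "nat \<Rightarrow> real"
  where "\<And>k. k < m \<Longrightarrow> arg_det (w k) (\<phi> k)" and "strict_mono_on {..<m} \<phi>"
    and "\<And>k. k < m \<Longrightarrow> \<phi> 0 \<le> \<phi> k \<and> \<phi> k < \<phi> 0 + 2 * pi"
proof -
  obtain \<phi> :: "nat \<Rightarrow> real" where arg: "\<forall>k<m. arg_det (w k) (\<phi> k)"
    and step: "\<forall>k. Suc k < m \<longrightarrow> \<phi> k < \<phi> (Suc k)"
    and turn: "\<phi> (m - 1) < \<phi> 0 + 2 * pi"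
    using assms unfolding smooth_complete_fan_def by blast
  have mono: "strict_mono_on {..<m} \<phi>"
  proof (rule strict_mono_onI)
    fix k l assume "k \<in> {..<m}" "l \<in> {..<m}" "k < l"
    then have sub: "{k..<l} \<subseteq> {k. Suc k < m}"
      by auto
    show "\<phi> k < \<phi> l"
      by (rule lift_Suc_mono_less_ivl[OF _ \<open>k < l\<close> sub]) (use step in simp)
  qed
  have "\<phi> 0 \<le> \<phi> k \<and> \<phi> k < \<phi> 0 + 2 * pi" if "k < m" for k
  proof -
    have "\<phi> 0 \<le> \<phi> k" "\<phi> k \<le> \<phi> (m - 1)"
      using that by (auto intro!: strict_mono_on_leD[OF mono])
    then show ?thesis
      using turn by simp
  qed
  with arg mono show thesis
    by (intro that) auto
qed

lemma smooth_complete_fan_inj_on: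
  assumes "smooth_complete_fan m w"
  shows "inj_on w {..<m}"
proof (rule inj_onI)
  obtain \<phi> where arg: "\<And>k. k < m \<Longrightarrow> arg_det (w k) (\<phi> k)" and mono: "strict_mono_on {..<m} \<phi>"
    and window: "\<And>k. k < m \<Longrightarrow> \<phi> 0 \<le> \<phi> k \<and> \<phi> k < \<phi> 0 + 2 * pi"
    using smooth_complete_fan_angles[OF assms] by blast
  fix k l assume k: "k \<in> {..<m}" and l: "l \<in> {..<m}" and "w k = w l"
  then obtain z :: int where "\<phi> l = \<phi> k + 2 * pi * z"
    using arg arg_det_unique by fastforce
  then have "\<phi> k = \<phi> l"
    using angle_window[of "\<phi> 0" "\<phi> k" "\<phi> l" z] window k l by force
  then show "k = l"
    using strict_mono_on_eqD[OF mono] k l by metis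
qed

lemma smooth_complete_fan_det2_Suc:
  assumes "smooth_complete_fan m w" "Suc k < m"
  shows "det2 (w k) (w (Suc k)) = 1"
proof -
  have "(k + 1) mod m = Suc k"
    using assms(2) by simp
  then show ?thesis
    using assms unfolding smooth_complete_fan_def by (metis Suc_lessD)
qed

lemma Suc_mod_eq_if:
  fixes k m :: nat
  assumes "k < m"
  shows "(k + 1) mod m = (if k + 1 = m then 0 else k + 1)"
proof (cases "k + 1 = m")
  case False
  with assms have "k + 1 < m"
    by simp
  then show ?thesis
    by simp
qed simp

lemma pred_mod_eq_if:
  fixes k m :: nat
  assumes "k < m"
  shows "(k + m - 1) mod m = (if k = 0 then m - 1 else k - 1)"
proof (cases k)
  case (Suc l)
  then have "(k + m - 1) mod m = l mod m"
    by simp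
  with Suc assms show ?thesis
    by simp
qed (use assms in simp)

lemma toric_int_commute: "toric_int m w j k = toric_int m w k j"
  unfolding toric_int_def by auto

lemma toric_pair_commute: "toric_pair m w c d = toric_pair m w d c"
  unfolding toric_pair_def
  by (subst sum.swap) (simp add: toric_int_commute mult_ac)

abbreviation toric_divisor :: "nat \<Rightarrow> nat \<Rightarrow> int" where
  "toric_divisor k \<equiv> \<lambda>l. if l = k then 1 else 0"

lemma toric_pair_toric_divisor:
  assumes "k < m"
  shows "toric_pair m w c (toric_divisor k) = (\<Sum>j<m. c j * toric_int m w j k)"
proof -
  have "(\<Sum>l<m. c j * toric_divisor k l * toric_int m w j l)
      = (\<Sum>l<m. if l = k then c j * toric_int m w j k else 0)" for j
    by (intro sum.cong) auto
  then show ?thesis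
    unfolding toric_pair_def using assms by simp
qed

lemma toric_pair_eq_sum_toric_divisor:
  "toric_pair m w c d = (\<Sum>k<m. d k * toric_pair m w c (toric_divisor k))"
proof -
  have "toric_pair m w c d = (\<Sum>k<m. d k * (\<Sum>j<m. c j * toric_int m w j k))"
    unfolding toric_pair_def by (subst sum.swap) (simp add: sum_distrib_left mult_ac)
  then show ?thesis
    by (simp add: toric_pair_toric_divisor)
qed

lemma toric_pair_toric_divisor_neighbours:
  assumes "3 \<le> m" "k < m"
  shows "toric_pair m w c (toric_divisor k)
    = c k * toric_int m w k k + c ((k + 1) mod m) + c ((k + m - 1) mod m)"
proof -
  let ?next = "(k + 1) mod m" and ?prev = "(k + m - 1) mod m"
  have distinct: "?next < m" "?prev < m" "?next \<noteq> k" "?prev \<noteq> k" "?next \<noteq> ?prev"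
    using assms unfolding Suc_mod_eq_if[OF \<open>k < m\<close>] pred_mod_eq_if[OF \<open>k < m\<close>] by auto
  have "c j * toric_int m w j k
      = (if j = k then c k * toric_int m w k k else 0) + (if j = ?next then c j else 0)
        + (if j = ?prev then c j else 0)" if "j < m" for j
  proof -
    have "j \<noteq> k \<Longrightarrow> k = (j + 1) mod m \<longleftrightarrow> j = ?prev"
      using assms that unfolding Suc_mod_eq_if[OF that] pred_mod_eq_if[OF \<open>k < m\<close>] by auto
    then show ?thesis
      using distinct unfolding toric_int_def by auto
  qed
  then have "(\<Sum>j<m. c j * toric_int m w j k)
      = (\<Sum>j<m. (if j = k then c k * toric_int m w k k else 0) + (if j = ?next then c j else 0)
          + (if j = ?prev then c j else 0))"
    by (intro sum.cong) auto
  also have "\<dots> = c k * toric_int m w k k + c ?next + c ?prev"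
    using distinct assms by (simp add: sum.distrib)
  finally show ?thesis
    using toric_pair_toric_divisor[OF \<open>k < m\<close>] by simp
qed

definition weight_divisor :: "(nat \<Rightarrow> int \<times> int) \<Rightarrow> (nat \<Rightarrow> int) \<Rightarrow> nat \<Rightarrow> int" where
  "weight_divisor w r k = (\<Sum>l<k. r l * det2 (w l) (w k))"

lemma weight_divisor_0 [simp]: "weight_divisor w r 0 = 0"
  by (simp add: weight_divisor_def)

lemma weight_divisor_1: "det2 (w 0) (w 1) = 1 \<Longrightarrow> weight_divisor w r 1 = r 0"
  by (simp add: weight_divisor_def)

lemma weight_divisor_last:
  assumes "\<And>x. (\<Sum>l<m. r l * det2 (w l) x) = 0"
  shows "weight_divisor w r (m - 1) = 0"
proof (cases m)
  case (Suc l)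
  then show ?thesis
    using assms[of "w l"] by (simp add: weight_divisor_def)
qed simp

lemma weight_divisor_second_last:
  assumes "\<And>x. (\<Sum>l<m. r l * det2 (w l) x) = 0" and "2 \<le> m"
    and "det2 (w (m - 2)) (w (m - 1)) = 1"
  shows "weight_divisor w r (m - 2) = r (m - 1)"
proof -
  obtain p where m: "m = Suc (Suc p)"
    using \<open>2 \<le> m\<close> by (metis add_2_eq_Suc le_Suc_ex)
  have "0 = (\<Sum>l<m. r l * det2 (w l) (w p))"
    using assms(1) by simp
  also have "\<dots> = weight_divisor w r p - r (Suc p)"
    using assms(3) det2_swap[of "w (Suc p)" "w p"] by (simp add: m weight_divisor_def)
  finally show ?thesis
    by (simp add: m)
qed

lemma weight_divisor_recurrence:
  assumes "det2 (w p) (w (p + 1)) = 1" "det2 (w (p + 1)) (w (p + 2)) = 1"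
  shows "weight_divisor w r p + weight_divisor w r (p + 2)
    = det2 (w p) (w (p + 2)) * weight_divisor w r (p + 1) + r (p + 1)"
proof -
  let ?b = "det2 (w p) (w (p + 2))"
  have "det2 (w l) (w p) + det2 (w l) (w (p + 2)) = ?b * det2 (w l) (w (p + 1))" for l
    using det2_plucker[of "w p" "w (p + 1)" "w l" "w (p + 2)"] assms det2_swap[of "w (p + 2)" "w p"]
    by (simp add: algebra_simps)
  then have "r l * det2 (w l) (w p) + r l * det2 (w l) (w (p + 2))
      = ?b * (r l * det2 (w l) (w (p + 1)))" for l
    by (metis distrib_left mult.left_commute)
  then have "(\<Sum>l<p. r l * det2 (w l) (w p)) + (\<Sum>l<p. r l * det2 (w l) (w (p + 2)))
      = ?b * (\<Sum>l<p. r l * det2 (w l) (w (p + 1)))"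
    by (simp add: sum.distrib[symmetric] sum_distrib_left)
  then show ?thesis
    using assms by (simp add: weight_divisor_def numeral_2_eq_2 algebra_simps)
qed

lemma toric_pair_weight_divisor:
  assumes fan: "smooth_complete_fan m w" and relation: "\<And>x. (\<Sum>l<m. r l * det2 (w l) x) = 0"
    and "k < m"
  shows "toric_pair m w (weight_divisor w r) (toric_divisor k) = r k"
proof -
  have "3 \<le> m"
    using fan unfolding smooth_complete_fan_def by simp
  note det = smooth_complete_fan_det2_Suc[OF fan]
  let ?c = "weight_divisor w r" and ?next = "(k + 1) mod m" and ?prev = "(k + m - 1) mod m"
  have "toric_pair m w ?c (toric_divisor k) = ?c k * toric_int m w k k + ?c ?next + ?c ?prev"
    by (rule toric_pair_toric_divisor_neighbours[OF \<open>3 \<le> m\<close> \<open>k < m\<close>])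
  also have "\<dots> = - det2 (w ?prev) (w ?next) * ?c k + ?c ?next + ?c ?prev"
    by (simp add: toric_int_def)
  also have "\<dots> = r k"
  proof -
    note next_eq = Suc_mod_eq_if[OF \<open>k < m\<close>] and prev_eq = pred_mod_eq_if[OF \<open>k < m\<close>]
    consider "k = 0" | "k = m - 1" | p where "k = p + 1" "p + 2 < m"
      using \<open>k < m\<close> by (cases k; cases "k + 1 = m") auto
    then show ?thesis
    proof cases
      case 1
      then show ?thesis
        using \<open>3 \<le> m\<close> det[of 0] weight_divisor_1 weight_divisor_last[OF relation]
        by (simp add: next_eq prev_eq)
    next
      case 2
      then have "?next = 0" "?prev = m - 2" "k \<noteq> 0"
        using \<open>3 \<le> m\<close> next_eq prev_eq by auto
      then show ?thesis
        using 2 \<open>3 \<le> m\<close> det[of "m - 2"] weight_divisor_second_last[OF relation]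
          weight_divisor_last[OF relation]
        by (simp add: Suc_diff_Suc numeral_2_eq_2)
    next
      case 3
      then have "?next = p + 2" "?prev = p"
        using next_eq prev_eq by auto
      then show ?thesis
        using 3 det[of p] det[of "p + 1"] weight_divisor_recurrence[of w p r]
        by (simp add: algebra_simps)
    qed
  qed
  finally show ?thesis .
qed

locale rays_in_fan =
  fixes m :: nat and w :: "nat \<Rightarrow> int \<times> int" and n :: nat and v :: "nat \<Rightarrow> int \<times> int"
  assumes fan: "smooth_complete_fan m w"
    and rays: "fan_contains_rays m w n v"
begin

definition ray_index :: "nat \<Rightarrow> nat" where
  "ray_index i = (THE k. k < m \<and> w k = v i)"

lemma ray_index_unique:
  assumes "i < n" "k < m" "w k = v i"
  shows "ray_index i = k"
  unfolding ray_index_def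
proof (rule the_equality)
  show "\<And>l. l < m \<and> w l = v i \<Longrightarrow> l = k"
    using smooth_complete_fan_inj_on[OF fan] assms by (metis inj_onD lessThan_iff)
qed (use assms in simp)

lemma ray_index:
  assumes "i < n"
  shows "ray_index i < m" and "w (ray_index i) = v i"
proof -
  obtain k where "k < m" "w k = v i"
    using rays assms unfolding fan_contains_rays_def by blast
  then show "ray_index i < m" "w (ray_index i) = v i"
    using ray_index_unique[OF assms] by simp_all
qed

definition ray_weight :: "(nat \<Rightarrow> int) \<Rightarrow> nat \<Rightarrow> int" where
  "ray_weight a k = (\<Sum>i | i < n \<and> v i = w k. a i)"

lemma sum_ray_weight: "(\<Sum>k<m. ray_weight a k * f k) = (\<Sum>i<n. a i * f (ray_index i))"
proof -
  have "ray_weight a k = (\<Sum>i<n. if ray_index i = k then a i else 0)" if "k < m" for k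
  proof -
    have "v i = w k \<longleftrightarrow> ray_index i = k" if "i < n" for i
      using ray_index(2)[OF \<open>i < n\<close>] ray_index_unique[OF \<open>i < n\<close> \<open>k < m\<close>] by metis
    then have "{i. i < n \<and> v i = w k} = {i \<in> {..<n}. ray_index i = k}"
      by auto
    then show ?thesis
      unfolding ray_weight_def using sum.inter_filter[of "{..<n}" a "\<lambda>i. ray_index i = k"] by simp
  qed
  then have "(\<Sum>k<m. ray_weight a k * f k)
      = (\<Sum>k<m. \<Sum>i<n. if ray_index i = k then a i * f k else 0)"
    by (simp add: sum_distrib_right if_distrib[of "\<lambda>x. x * f _"] cong: if_cong)
  also have "\<dots> = (\<Sum>i<n. \<Sum>k<m. if ray_index i = k then a i * f k else 0)"
    by (rule sum.swap)
  also have "\<dots> = (\<Sum>i<n. a i * f (ray_index i))"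
    using ray_index(1) by (simp add: sum.delta)
  finally show ?thesis .
qed

lemma sum_ray_weight_det2: "(\<Sum>k<m. ray_weight a k * det2 (w k) x) = det2 (psi n v a) x"
proof -
  have "(\<Sum>k<m. ray_weight a k * det2 (w k) x) = (\<Sum>i<n. a i * det2 (v i) x)"
    unfolding sum_ray_weight using ray_index(2) by (auto intro!: sum.cong)
  then show ?thesis
    by (simp add: sum_det2_psi)
qed

lemma represents_C_iff:
  "represents_C m w n v a c \<longleftrightarrow> (\<forall>k<m. toric_pair m w c (toric_divisor k) = ray_weight a k)"
  by (simp add: represents_C_def ray_weight_def)

lemma represents_C_weight_divisor:
  assumes "in_K n v a"
  shows "represents_C m w n v a (weight_divisor w (ray_weight a))"
proof -
  have "(\<Sum>k<m. ray_weight a k * det2 (w k) x) = 0" for x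
    using assms unfolding sum_ray_weight_det2 in_K_def by (simp add: det2_def)
  then show ?thesis
    unfolding represents_C_iff using toric_pair_weight_divisor[OF fan] by blast
qed

lemma toric_pair_represents_C:
  assumes "represents_C m w n v a c"
  shows "toric_pair m w c d = (\<Sum>k<m. d k * ray_weight a k)"
  using assms unfolding toric_pair_eq_sum_toric_divisor[of m w c d] represents_C_iff
  by (auto intro!: sum.cong)

lemma weight_divisor_ray_weight:
  assumes "k < m"
  shows "weight_divisor w (ray_weight a) k
    = (\<Sum>i<n. a i * (if ray_index i < k then det2 (v i) (w k) else 0))"
proof -
  have "{l \<in> {..<m}. l < k} = {..<k}"
    using assms by auto
  then have "weight_divisor w (ray_weight a) k
      = (\<Sum>l<m. ray_weight a l * (if l < k then det2 (w l) (w k) else 0))"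
    unfolding weight_divisor_def
    by (simp add: sum.inter_filter[symmetric] if_distrib[of "(*) _"] cong: if_cong)
  also have "\<dots> = (\<Sum>i<n. a i * (if ray_index i < k then det2 (w (ray_index i)) (w k) else 0))"
    by (rule sum_ray_weight)
  also have "\<dots> = (\<Sum>i<n. a i * (if ray_index i < k then det2 (v i) (w k) else 0))"
    using ray_index(2) by (auto intro!: sum.cong)
  finally show ?thesis .
qed

lemma toric_pair_represents_C_in_K:
  assumes "in_K n v a" "represents_C m w n v a c" "represents_C m w n v b d"
  shows "toric_pair m w c d
    = (\<Sum>i<n. \<Sum>j<n. if ray_index i < ray_index j then a i * b j * det2 (v i) (v j) else 0)"
proof -
  let ?c = "weight_divisor w (ray_weight a)"
  have "toric_pair m w c d = (\<Sum>k<m. d k * ray_weight a k)"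
    by (rule toric_pair_represents_C[OF assms(2)])
  also have "\<dots> = toric_pair m w ?c d"
    by (rule toric_pair_represents_C[OF represents_C_weight_divisor[OF assms(1)], symmetric])
  also have "\<dots> = toric_pair m w d ?c"
    by (rule toric_pair_commute)
  also have "\<dots> = (\<Sum>k<m. ray_weight b k * ?c k)"
    unfolding toric_pair_represents_C[OF assms(3)] by (simp add: mult.commute)
  also have "\<dots> = (\<Sum>j<n. b j * ?c (ray_index j))"
    by (rule sum_ray_weight)
  also have "\<dots> = (\<Sum>j<n. b j * (\<Sum>i<n. a i * (if ray_index i < ray_index j then det2 (v i) (v j) else 0)))"
  proof (intro sum.cong refl arg_cong[where f = "(*) _"])
    fix j assume "j \<in> {..<n}"
    then show "?c (ray_index j) = (\<Sum>i<n. a i * (if ray_index i < ray_index j then det2 (v i) (v j) else 0))"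
      using weight_divisor_ray_weight[of "ray_index j" a] ray_index[of j] by (simp cong: if_cong)
  qed
  also have "\<dots> = (\<Sum>i<n. \<Sum>j<n. if ray_index i < ray_index j then a i * b j * det2 (v i) (v j) else 0)"
    by (subst sum.swap) (simp add: sum_distrib_left mult_ac if_distrib cong: if_cong)
  finally show ?thesis .
qed

lemma ray_index_less_iff_rotated_less:
  assumes "cyclically_ordered n v"
  obtains h where "mono_on {..<n} h"
    and "\<And>i j. i < n \<Longrightarrow> j < n \<Longrightarrow> v i \<noteq> v j \<Longrightarrow> ray_index i < ray_index j \<longleftrightarrow> rotated_less h i j"
proof (cases "n = 0")
  case True
  then show ?thesis
    using that[of "\<lambda>_. False"] by (simp add: mono_on_def)
next
  case False
  obtain \<phi> where \<phi>_arg: "\<And>k. k < m \<Longrightarrow> arg_det (w k) (\<phi> k)"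
    and \<phi>_mono: "strict_mono_on {..<m} \<phi>"
    and \<phi>_window: "\<And>k. k < m \<Longrightarrow> \<phi> 0 \<le> \<phi> k \<and> \<phi> k < \<phi> 0 + 2 * pi"
    using smooth_complete_fan_angles[OF fan] by blast
  obtain \<theta> where \<theta>_arg: "\<And>i. i < n \<Longrightarrow> arg_det (v i) (\<theta> i)"
    and \<theta>_mono: "mono_on {..<n} \<theta>" and \<theta>_turn: "\<And>i. i < n \<Longrightarrow> \<theta> i \<le> \<theta> 0 + 2 * pi"
    using cyclically_ordered_angles[OF assms] by blast
  define \<sigma> where "\<sigma> i = \<phi> (ray_index i)" for i
  have "arg_det (v i) (\<sigma> i)" if "i < n" for i
    using \<phi>_arg[OF ray_index(1)[OF that]] ray_index(2)[OF that] by (simp add: \<sigma>_def)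
  then have congruent: "\<exists>z::int. \<theta> i = \<sigma> i + 2 * pi * z" if "i < n" for i
    using arg_det_unique \<theta>_arg that by blast
  have \<sigma>_window: "\<phi> 0 \<le> \<sigma> i \<and> \<sigma> i < \<phi> 0 + 2 * pi" if "i < n" for i
    using \<phi>_window[OF ray_index(1)[OF that]] by (simp add: \<sigma>_def)
  obtain h where h_mono: "mono_on {..<n} h"
    and \<sigma>_order: "\<And>i j. i < n \<Longrightarrow> j < n \<Longrightarrow> \<sigma> i \<noteq> \<sigma> j \<Longrightarrow> \<sigma> i < \<sigma> j \<longleftrightarrow> rotated_less h i j"
    using window_angles_rotated_less[of n \<theta> "\<phi> 0" \<sigma>] False \<theta>_mono \<theta>_turn \<sigma>_window congruent
    by auto
  show thesis
  proof (rule that[OF h_mono])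
    fix i j assume "i < n" "j < n" "v i \<noteq> v j"
    then have "ray_index i \<noteq> ray_index j"
      using ray_index(2) by metis
    then have "\<sigma> i \<noteq> \<sigma> j" and "ray_index i < ray_index j \<longleftrightarrow> \<sigma> i < \<sigma> j"
      using strict_mono_on_eqD[OF \<phi>_mono] strict_mono_on_less[OF \<phi>_mono] ray_index(1)
        \<open>i < n\<close> \<open>j < n\<close> unfolding \<sigma>_def by (metis lessThan_iff)+
    then show "ray_index i < ray_index j \<longleftrightarrow> rotated_less h i j"
      using \<sigma>_order \<open>i < n\<close> \<open>j < n\<close> by blast
  qed
qed

end

theorem lemma2p4:
  fixes n :: nat and v :: "nat \<Rightarrow> int \<times> int"
    and m :: nat and w :: "nat \<Rightarrow> int \<times> int"
    and \<alpha> \<beta> :: "nat \<Rightarrow> int"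
  assumes "finite_coker n v"
    and "is_seed n v"
    and "cyclically_ordered n v"
    and "smooth_complete_fan m w"
    and "fan_contains_rays m w n v"
    and "in_K n v \<alpha>" and "in_K n v \<beta>"
  shows "(\<exists>c. represents_C m w n v \<alpha> c) \<and> (\<exists>d. represents_C m w n v \<beta> d)
    \<and> (\<forall>c d. represents_C m w n v \<alpha> c \<longrightarrow> represents_C m w n v \<beta> d \<longrightarrow>
          blowup_pair m w n v \<alpha> \<beta> c d = - chi n v \<alpha> \<beta>)"
proof -
  interpret rays_in_fan m w n v
    using assms(4,5) by unfold_locales
  obtain h where h_mono: "mono_on {..<n} h"
    and order: "\<And>i j. i < n \<Longrightarrow> j < n \<Longrightarrow> v i \<noteq> v j \<Longrightarrow>
      ray_index i < ray_index j \<longleftrightarrow> rotated_less h i j"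
    using ray_index_less_iff_rotated_less[OF assms(3)] by blast
  have "blowup_pair m w n v \<alpha> \<beta> c d = - chi n v \<alpha> \<beta>"
    if c: "represents_C m w n v \<alpha> c" and d: "represents_C m w n v \<beta> d" for c d
  proof -
    have "toric_pair m w c d = (\<Sum>i<n. \<Sum>j<n.
        if ray_index i < ray_index j then \<alpha> i * \<beta> j * det2 (v i) (v j) else 0)"
      by (rule toric_pair_represents_C_in_K[OF assms(6) c d])
    also have "\<dots> = (\<Sum>i<n. \<Sum>j<n.
        if rotated_less h i j then \<alpha> i * \<beta> j * det2 (v i) (v j) else 0)"
      using order by (intro sum.cong refl) (metis det2_self lessThan_iff mult_zero_right)
    also have "\<dots> = (\<Sum>i<n. \<Sum>j<n. if i < j then \<alpha> i * \<beta> j * det2 (v i) (v j) else 0)"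
      by (rule sum_rotated_less_det2[OF assms(6,7) h_mono])
    finally show ?thesis
      using chi_in_K[OF assms(6,7)] by (simp add: blowup_pair_def)
  qed
  then show ?thesis
    using represents_C_weight_divisor assms(6,7) by blast
qed

end
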